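(* Let $X$ be a real Banach space and let $A: X \rightrightarrows X^*$ be a maximal monotone operator whose Fitzpatrick family is a singleton, i.e. $\mathcal{F}_A = \{F_A\}$. Then the following are equivalent: (i) $A$ is $3$-monotone; (ii) $A$ is cyclically monotone. Moreover, in this case, for every $v^* \in \mathrm{Im}(A)$ the function $x \mapsto F_A(x,v^* )$ is proper, convex and lower semicontinuous on $X$, and \[ A = \partial F_A(\cdot, v^* ). \]
   Context: A function $h: X\times X^* \to \mathbb{R}\cup\{+\infty\}$ is a representative function of $A$ if (R1) $h$ is proper, convex and lower semicontinuous; (R2) $h(x,x^* ) \ge \langle x,x^*\rangle$ for all $(x,x^* )\in X\times X^*$; (R3) $h(x,x^* ) = \langle x,x^*\rangle$ for all $(x,x^* )\in \mathrm{Gr}(A)$. The Fitzpatrick family $\mathcal{F}_A$ is the set of all representative functions of $A$. The Fitzpatrick function is $F_A(x,x^* ) = \sup_{(y,y^* )\in\mathrm{Gr}(A)}\{\langle y,x^*\rangle + \langle x,y^*\rangle - \langle y,y^*\rangle\}$. $\mathrm{Im}(A) = \{x^*: \exists x,\ x^*\in Ax\}$. $A$ is $n$-monotone if $\sum_{i=1}^n \langle a_i,a_i^*\rangle \ge \sum_{i=1}^n \langle a_{i+1},a_i^*\rangle$ for all $(a_i,a_i^* )\in\mathrm{Gr}(A)$, $i=1,\dots,n$, with $a_{n+1}=a_1$; cyclically monotone means $n$-monotone for all $n\in\mathbb{N}$. $\partial$ denotes the convex subdifferential. *)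

theory Defs
  imports "HOL-Analysis.Analysis"
begin

(* The dual space X* is modelled as the Banach space of bounded linear functionals
  'a =>L real; the pairing is the evaluation.  Functions with values in
  R \<union> {+\<infinity>} are modelled as ereal-valued functions that never take the value -\<infinity>. *)

definition pairing :: "'a::real_normed_vector \<Rightarrow> ('a \<Rightarrow>\<^sub>L real) \<Rightarrow> real" where
  "pairing x xs = blinfun_apply xs x"

definition graph :: "('a \<Rightarrow> 'b set) \<Rightarrow> ('a \<times> 'b) set" where
  "graph A = {(x, xs). xs \<in> A x}"

definition image_op :: "('a \<Rightarrow> 'b set) \<Rightarrow> 'b set" where
  "image_op A = {xs. \<exists>x. xs \<in> A x}"

definition monotone_op :: "('a::real_normed_vector \<Rightarrow> ('a \<Rightarrow>\<^sub>L real) set) \<Rightarrow> bool" where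
  "monotone_op A \<longleftrightarrow> (\<forall>(x, xs)\<in>graph A. \<forall>(y, ys)\<in>graph A. pairing (x - y) (xs - ys) \<ge> 0)"

definition maximal_monotone :: "('a::real_normed_vector \<Rightarrow> ('a \<Rightarrow>\<^sub>L real) set) \<Rightarrow> bool" where
  "maximal_monotone A \<longleftrightarrow> monotone_op A \<and>
     (\<forall>B. monotone_op B \<and> graph A \<subseteq> graph B \<longrightarrow> graph B = graph A)"

definition n_monotone :: "nat \<Rightarrow> ('a::real_normed_vector \<Rightarrow> ('a \<Rightarrow>\<^sub>L real) set) \<Rightarrow> bool" where
  "n_monotone n A \<longleftrightarrow> (\<forall>(a :: nat \<Rightarrow> 'a) (as :: nat \<Rightarrow> ('a \<Rightarrow>\<^sub>L real)).
     (\<forall>i\<in>{1..n}. (a i, as i) \<in> graph A) \<longrightarrow>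
     (\<Sum>i=1..n. pairing (a i) (as i)) \<ge> (\<Sum>i=1..n. pairing (if i = n then a 1 else a (i + 1)) (as i)))"

definition cyclically_monotone :: "('a::real_normed_vector \<Rightarrow> ('a \<Rightarrow>\<^sub>L real) set) \<Rightarrow> bool" where
  "cyclically_monotone A \<longleftrightarrow> (\<forall>n::nat. n_monotone n A)"

definition proper_fun :: "('a \<Rightarrow> ereal) \<Rightarrow> bool" where
  "proper_fun f \<longleftrightarrow> (\<forall>x. f x \<noteq> -\<infinity>) \<and> (\<exists>x. f x \<noteq> \<infinity>)"

definition convex_fun :: "('a::real_vector \<Rightarrow> ereal) \<Rightarrow> bool" where
  "convex_fun f \<longleftrightarrow> (\<forall>x y. \<forall>t::real. 0 \<le> t \<and> t \<le> 1 \<longrightarrow>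
     f (t *\<^sub>R x + (1 - t) *\<^sub>R y) \<le> ereal t * f x + ereal (1 - t) * f y)"

(* Lower semicontinuity with respect to the (norm) topology of the domain. *)
definition lsc_fun :: "('a::topological_space \<Rightarrow> ereal) \<Rightarrow> bool" where
  "lsc_fun f \<longleftrightarrow> (\<forall>x. \<forall>c. c < f x \<longrightarrow> (\<forall>\<^sub>F y in nhds x. c < f y))"

definition fitzpatrick :: "('a::real_normed_vector \<Rightarrow> ('a \<Rightarrow>\<^sub>L real) set) \<Rightarrow> 'a \<times> ('a \<Rightarrow>\<^sub>L real) \<Rightarrow> ereal" where
  "fitzpatrick A = (\<lambda>(x, xs). SUP (y, ys)\<in>graph A. ereal (pairing y xs + pairing x ys - pairing y ys))"

definition fitzpatrick_family :: "('a::real_normed_vector \<Rightarrow> ('a \<Rightarrow>\<^sub>L real) set) \<Rightarrow> ('a \<times> ('a \<Rightarrow>\<^sub>L real) \<Rightarrow> ereal) set" where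
  "fitzpatrick_family A = {h. proper_fun h \<and> convex_fun h \<and> lsc_fun h \<and>
     (\<forall>x xs. h (x, xs) \<ge> ereal (pairing x xs)) \<and>
     (\<forall>(x, xs)\<in>graph A. h (x, xs) = ereal (pairing x xs))}"

definition subdiff :: "('a::real_normed_vector \<Rightarrow> ereal) \<Rightarrow> 'a \<Rightarrow> ('a \<Rightarrow>\<^sub>L real) set" where
  "subdiff f x = {xs. f x \<noteq> \<infinity> \<and> f x \<noteq> -\<infinity> \<and>
     (\<forall>y. f y \<ge> f x + ereal (pairing (y - x) xs))}"

end

theory Submission
  imports Defs
begin

(* If A is 3-monotone, the Fitzpatrick function of order 3,
     F3 (x, xs) = sup over (a, as), (b, bs) in Gr A of
                  <x, as> + <a, bs> + <b, xs> - <a, as> - <b, bs>,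
   is again a representative function of A (3-monotonicity is what makes F3 agree with the
   pairing on Gr A), so F3 = F_A by uniqueness. Taking (a, as) = (x, xs) in F3 (y, vs) gives
   F_A (x, vs) + <y - x, xs> <= F_A (y, vs) for (x, xs) in Gr A, and 3-monotonicity bounds
   F_A (x, vs) from above when vs in Im A. Hence Gr A lies in the graph of the subdifferential
   of F_A (., vs); subdifferentials are monotone, so maximality gives equality, and they are
   cyclically monotone. *)

lemma sum_cyclic_shift:
  fixes g :: "nat \<Rightarrow> 'b::comm_monoid_add"
  shows "(\<Sum>i=1..n. g (if i = n then 1 else i + 1)) = (\<Sum>i=1..n. g i)"
proof (cases n)
  case (Suc m)
  have "(\<Sum>i=1..Suc m. g (if i = Suc m then 1 else i + 1)) = (\<Sum>i=1..m. g (Suc i)) + g 1"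
    by (simp add: sum.cl_ivl_Suc)
  also have "\<dots> = (\<Sum>i=Suc 1..Suc m. g i) + g 1"
    by (simp only: sum.shift_bounds_cl_Suc_ivl)
  also have "\<dots> = (\<Sum>i=1..Suc m. g i)"
    by (subst add.commute) (rule sum.atLeast_Suc_atMost[symmetric]; simp)
  finally show ?thesis using Suc by simp
qed simp

lemma lsc_fun_SUP_continuous:
  fixes L :: "'i \<Rightarrow> 'b::topological_space \<Rightarrow> real"
  assumes "\<And>i. i \<in> I \<Longrightarrow> continuous_on UNIV (L i)"
  shows "lsc_fun (\<lambda>z. SUP i\<in>I. ereal (L i z))"
  unfolding lsc_fun_def
proof (intro allI impI)
  fix x c assume "c < (SUP i\<in>I. ereal (L i x))"
  then obtain i where i: "i \<in> I" "c < ereal (L i x)" by (auto simp: less_SUP_iff)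
  have "((\<lambda>y. ereal (L i y)) \<longlongrightarrow> ereal (L i x)) (nhds x)"
    using assms[OF i(1)] by (intro tendsto_ereal) (simp add: continuous_on_def tendsto_at_iff_tendsto_nhds)
  then have "\<forall>\<^sub>F y in nhds x. c < ereal (L i y)" using i(2) by (rule order_tendstoD)
  then show "\<forall>\<^sub>F y in nhds x. c < (SUP i\<in>I. ereal (L i y))"
    by eventually_elim (use i(1) in \<open>auto simp: less_SUP_iff\<close>)
qed

lemma convex_fun_SUP_affine:
  fixes L :: "'i \<Rightarrow> 'b::real_vector \<Rightarrow> real"
  assumes "\<And>i x y t. i \<in> I \<Longrightarrow> L i (t *\<^sub>R x + (1 - t) *\<^sub>R y) = t * L i x + (1 - t) * L i y"
  shows "convex_fun (\<lambda>z. SUP i\<in>I. ereal (L i z))"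
  unfolding convex_fun_def
proof (intro allI impI)
  fix x y and t :: real assume t: "0 \<le> t \<and> t \<le> 1"
  show "(SUP i\<in>I. ereal (L i (t *\<^sub>R x + (1 - t) *\<^sub>R y)))
     \<le> ereal t * (SUP i\<in>I. ereal (L i x)) + ereal (1 - t) * (SUP i\<in>I. ereal (L i y))"
  proof (rule SUP_least)
    fix i assume i: "i \<in> I"
    have "ereal (L i (t *\<^sub>R x + (1 - t) *\<^sub>R y)) = ereal t * ereal (L i x) + ereal (1 - t) * ereal (L i y)"
      using assms[OF i] by simp
    also have "\<dots> \<le> ereal t * (SUP i\<in>I. ereal (L i x)) + ereal (1 - t) * (SUP i\<in>I. ereal (L i y))"
      using t i by (intro add_mono ereal_mult_left_mono) (auto intro: SUP_upper)
    finally show "ereal (L i (t *\<^sub>R x + (1 - t) *\<^sub>R y)) \<le> \<dots>" .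
  qed
qed

lemma convex_fun_slice:
  fixes h :: "'a::real_vector \<times> 'b::real_vector \<Rightarrow> ereal"
  assumes "convex_fun h"
  shows "convex_fun (\<lambda>x. h (x, v))"
  unfolding convex_fun_def
proof (intro allI impI)
  fix x y :: 'a and t :: real assume "0 \<le> t \<and> t \<le> 1"
  moreover have "t *\<^sub>R (x, v) + (1 - t) *\<^sub>R (y, v) = (t *\<^sub>R x + (1 - t) *\<^sub>R y, v)"
    by (simp add: algebra_simps)
  ultimately show "h (t *\<^sub>R x + (1 - t) *\<^sub>R y, v) \<le> ereal t * h (x, v) + ereal (1 - t) * h (y, v)"
    using assms unfolding convex_fun_def by metis
qed

lemma lsc_fun_slice:
  fixes h :: "'a::topological_space \<times> 'b::topological_space \<Rightarrow> ereal"
  assumes "lsc_fun h"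
  shows "lsc_fun (\<lambda>x. h (x, v))"
  unfolding lsc_fun_def
proof (intro allI impI)
  fix x c assume "c < h (x, v)"
  then have "\<forall>\<^sub>F z in nhds (x, v). c < h z" using assms unfolding lsc_fun_def by blast
  moreover have "filterlim (\<lambda>y. (y, v)) (nhds (x, v)) (nhds x)"
    by (intro tendsto_Pair filterlim_ident tendsto_const)
  ultimately show "\<forall>\<^sub>F y in nhds x. c < h (y, v)" unfolding filterlim_iff by blast
qed

lemma monotone_op_subdiff: "monotone_op (subdiff f)"
  unfolding monotone_op_def
proof (clarsimp simp: graph_def)
  fix x xs y ys assume xs: "xs \<in> subdiff f x" and ys: "ys \<in> subdiff f y"
  obtain rx where rx: "f x = ereal rx" using xs by (cases "f x") (auto simp: subdiff_def)
  obtain ry where ry: "f y = ereal ry" using ys by (cases "f y") (auto simp: subdiff_def)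
  have "f x + ereal (pairing (y - x) xs) \<le> f y" "f y + ereal (pairing (x - y) ys) \<le> f x"
    using xs ys by (auto simp: subdiff_def)
  then have "rx + pairing (y - x) xs \<le> ry" "ry + pairing (x - y) ys \<le> rx"
    using rx ry by auto
  then show "0 \<le> pairing (x - y) (xs - ys)"
    by (simp add: pairing_def blinfun.diff_left blinfun.diff_right)
qed

lemma n_monotone_subdiff: "n_monotone n (subdiff f)"
  unfolding n_monotone_def
proof (intro allI impI)
  fix a :: "nat \<Rightarrow> 'a" and as assume G: "\<forall>i\<in>{1..n}. (a i, as i) \<in> graph (subdiff f)"
  define next_idx where "next_idx i = (if i = n then 1 else i + 1)" for i
  define g where "g x = real_of_ereal (f x)" for x
  have step: "pairing (a (next_idx i)) (as i) - pairing (a i) (as i) \<le> g (a (next_idx i)) - g (a i)"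
    if i: "i \<in> {1..n}" for i
  proof -
    have "next_idx i \<in> {1..n}" using i by (auto simp: next_idx_def)
    then have "f (a (next_idx i)) \<noteq> \<infinity>" "f (a (next_idx i)) \<noteq> -\<infinity>"
      using G by (auto simp: graph_def subdiff_def)
    moreover have "f (a i) + ereal (pairing (a (next_idx i) - a i) (as i)) \<le> f (a (next_idx i))"
      "f (a i) \<noteq> \<infinity>" "f (a i) \<noteq> -\<infinity>"
      using G i by (auto simp: graph_def subdiff_def)
    ultimately show ?thesis
      by (cases "f (a i)"; cases "f (a (next_idx i))") (auto simp: g_def pairing_def blinfun.diff_right)
  qed
  have "(\<Sum>i=1..n. pairing (a (next_idx i)) (as i)) - (\<Sum>i=1..n. pairing (a i) (as i))
      \<le> (\<Sum>i=1..n. g (a (next_idx i))) - (\<Sum>i=1..n. g (a i))"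
    unfolding sum_subtractf[symmetric] by (rule sum_mono) (rule step)
  also have "\<dots> = 0"
    using sum_cyclic_shift[of "g \<circ> a" n] by (simp add: next_idx_def)
  finally show "(\<Sum>i=1..n. pairing (if i = n then a 1 else a (i + 1)) (as i))
      \<le> (\<Sum>i=1..n. pairing (a i) (as i))"
    by (simp add: next_idx_def if_distrib)
qed

lemma cyclically_monotone_subdiff: "cyclically_monotone (subdiff f)"
  by (simp add: cyclically_monotone_def n_monotone_subdiff)

lemma maximal_monotone_eq_subdiff:
  assumes "maximal_monotone A" "graph A \<subseteq> graph (subdiff f)"
  shows "A = subdiff f"
proof -
  have "graph (subdiff f) = graph A"
    using assms monotone_op_subdiff unfolding maximal_monotone_def by blast
  then show ?thesis by (auto simp: graph_def fun_eq_iff)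
qed

lemma n_monotone_3D:
  assumes "n_monotone 3 A" "(a1, s1) \<in> graph A" "(a2, s2) \<in> graph A" "(a3, s3) \<in> graph A"
  shows "pairing a2 s1 + pairing a3 s2 + pairing a1 s3 \<le> pairing a1 s1 + pairing a2 s2 + pairing a3 s3"
proof -
  define a where "a = (\<lambda>i::nat. if i = 1 then a1 else if i = 2 then a2 else a3)"
  define s where "s = (\<lambda>i::nat. if i = 1 then s1 else if i = 2 then s2 else s3)"
  have "\<forall>i\<in>{1..3}. (a i, s i) \<in> graph A" using assms by (auto simp: a_def s_def)
  then have "(\<Sum>i=1..3. pairing (if i = 3 then a 1 else a (i + 1)) (s i))
      \<le> (\<Sum>i=1..3. pairing (a i) (s i))"
    using assms(1) unfolding n_monotone_def by blast
  then show ?thesis by (simp add: a_def s_def eval_nat_numeral)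
qed

lemma fitzpatrick_apply:
  "fitzpatrick A (x, xs) = (SUP (y, ys)\<in>graph A. ereal (pairing y xs + pairing x ys - pairing y ys))"
  by (simp add: fitzpatrick_def)

lemma graph_nonempty_if_fitzpatrick_proper:
  assumes "proper_fun (fitzpatrick A)"
  shows "graph A \<noteq> {}"
  using assms by (auto simp: proper_fun_def fitzpatrick_def bot_ereal_def)

lemma fitzpatrick_family_slice:
  assumes "h \<in> fitzpatrick_family A" "vs \<in> image_op A"
  shows "proper_fun (\<lambda>x. h (x, vs)) \<and> convex_fun (\<lambda>x. h (x, vs)) \<and> lsc_fun (\<lambda>x. h (x, vs))"
proof -
  have "h (x, vs) \<noteq> -\<infinity>" for x
    using assms(1) unfolding fitzpatrick_family_def proper_fun_def by blast
  moreover obtain u where "(u, vs) \<in> graph A"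
    using assms(2) by (auto simp: image_op_def graph_def)
  then have "h (u, vs) \<noteq> \<infinity>"
    using assms(1) unfolding fitzpatrick_family_def by auto
  ultimately show ?thesis
    using assms(1) convex_fun_slice lsc_fun_slice unfolding fitzpatrick_family_def proper_fun_def by blast
qed

lemma fitzpatrick_le_if_3_monotone:
  assumes "n_monotone 3 A" "(u, vs) \<in> graph A" "(x, xs) \<in> graph A"
  shows "fitzpatrick A (x, vs) \<le> ereal (pairing u vs + pairing x xs - pairing u xs)"
  unfolding fitzpatrick_apply
proof (clarsimp intro!: SUP_least)
  fix b bs assume "(b, bs) \<in> graph A"
  then show "pairing b vs + pairing x bs - pairing b bs \<le> pairing u vs + pairing x xs - pairing u xs"
    using n_monotone_3D[OF assms(1,2) _ assms(3)] by fastforce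
qed

definition fitzpatrick3 ::
  "('a::real_normed_vector \<Rightarrow> ('a \<Rightarrow>\<^sub>L real) set) \<Rightarrow> 'a \<times> ('a \<Rightarrow>\<^sub>L real) \<Rightarrow> ereal" where
  "fitzpatrick3 A = (\<lambda>(x, xs). SUP ((a, as), (b, bs))\<in>graph A \<times> graph A.
     ereal (pairing x as + pairing a bs + pairing b xs - pairing a as - pairing b bs))"

lemma fitzpatrick3_apply:
  "fitzpatrick3 A (x, xs) = (SUP ((a, as), (b, bs))\<in>graph A \<times> graph A.
     ereal (pairing x as + pairing a bs + pairing b xs - pairing a as - pairing b bs))"
  by (simp add: fitzpatrick3_def)

lemma fitzpatrick3_convex_lsc: "convex_fun (fitzpatrick3 A) \<and> lsc_fun (fitzpatrick3 A)"
proof -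
  define L :: "_ \<Rightarrow> 'a \<times> ('a \<Rightarrow>\<^sub>L real) \<Rightarrow> real" where
    "L = (\<lambda>((a, as), (b, bs)) (x, xs). pairing x as + pairing a bs + pairing b xs - pairing a as - pairing b bs)"
  have F3: "fitzpatrick3 A = (\<lambda>z. SUP p\<in>graph A \<times> graph A. ereal (L p z))"
    by (auto simp: fitzpatrick3_def L_def fun_eq_iff split_beta')
  have "L p (t *\<^sub>R z + (1 - t) *\<^sub>R w) = t * L p z + (1 - t) * L p w" for p z w t
    by (simp add: L_def split_beta' pairing_def blinfun.add_left blinfun.scaleR_left
        blinfun.diff_left blinfun.add_right blinfun.scaleR_right blinfun.diff_right algebra_simps)
  moreover have "continuous_on UNIV (L p)" for p
    unfolding L_def split_beta' pairing_def by (intro continuous_intros blinfun.continuous_on)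
  ultimately show ?thesis
    unfolding F3 by (auto intro: convex_fun_SUP_affine lsc_fun_SUP_continuous)
qed

lemma fitzpatrick_le_fitzpatrick3: "fitzpatrick A (x, xs) \<le> fitzpatrick3 A (x, xs)"
  unfolding fitzpatrick_apply
proof (clarsimp intro!: SUP_least)
  fix y ys assume "(y, ys) \<in> graph A"
  then show "ereal (pairing y xs + pairing x ys - pairing y ys) \<le> fitzpatrick3 A (x, xs)"
    unfolding fitzpatrick3_apply by (intro SUP_upper2[of "((y, ys), (y, ys))"]) auto
qed

lemma fitzpatrick3_graph:
  assumes "n_monotone 3 A" "(x, xs) \<in> graph A"
  shows "fitzpatrick3 A (x, xs) = ereal (pairing x xs)"
proof (rule antisym)
  show "fitzpatrick3 A (x, xs) \<le> ereal (pairing x xs)"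
    unfolding fitzpatrick3_apply
  proof (clarsimp intro!: SUP_least)
    fix a as b bs assume "(a, as) \<in> graph A" "(b, bs) \<in> graph A"
    then show "pairing x as + pairing a bs + pairing b xs - pairing a as - pairing b bs \<le> pairing x xs"
      using n_monotone_3D[OF assms(1) _ assms(2)] by fastforce
  qed
  show "ereal (pairing x xs) \<le> fitzpatrick3 A (x, xs)"
    unfolding fitzpatrick3_apply using assms(2) by (intro SUP_upper2[of "((x, xs), (x, xs))"]) auto
qed

lemma fitzpatrick3_in_family:
  assumes "n_monotone 3 A" "fitzpatrick A \<in> fitzpatrick_family A"
  shows "fitzpatrick3 A \<in> fitzpatrick_family A"
proof -
  have ge: "ereal (pairing x xs) \<le> fitzpatrick3 A (x, xs)" for x xs
    using assms(2) fitzpatrick_le_fitzpatrick3[of A x xs] unfolding fitzpatrick_family_def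
    by (blast intro: order_trans)
  obtain x xs where "(x, xs) \<in> graph A"
    using assms(2) graph_nonempty_if_fitzpatrick_proper unfolding fitzpatrick_family_def by fast
  then have "fitzpatrick3 A (x, xs) \<noteq> \<infinity>"
    using fitzpatrick3_graph[OF assms(1)] by simp
  moreover have "fitzpatrick3 A z \<noteq> -\<infinity>" for z
    using ge[of "fst z" "snd z"] by auto
  ultimately have "proper_fun (fitzpatrick3 A)"
    unfolding proper_fun_def by blast
  then show ?thesis
    using ge fitzpatrick3_graph[OF assms(1)] fitzpatrick3_convex_lsc[of A]
    unfolding fitzpatrick_family_def by auto
qed

lemma fitzpatrick_add_le_fitzpatrick3:
  assumes "(x, xs) \<in> graph A"
  shows "fitzpatrick A (x, vs) + ereal (pairing (y - x) xs) \<le> fitzpatrick3 A (y, vs)"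
proof -
  have "fitzpatrick A (x, vs) + ereal (pairing (y - x) xs)
      = (SUP q\<in>graph A. (case q of (b, bs) \<Rightarrow> ereal (pairing b vs + pairing x bs - pairing b bs))
          + ereal (pairing (y - x) xs))"
    unfolding fitzpatrick_apply using assms by (subst SUP_ereal_add_left) auto
  also have "\<dots> \<le> fitzpatrick3 A (y, vs)"
    unfolding fitzpatrick3_apply
  proof (clarsimp intro!: SUP_least)
    fix b bs assume "(b, bs) \<in> graph A"
    then show "ereal (pairing b vs + pairing x bs - pairing b bs + pairing (y - x) xs)
        \<le> (SUP ((a, as), (b, bs))\<in>graph A \<times> graph A.
            ereal (pairing y as + pairing a bs + pairing b vs - pairing a as - pairing b bs))"
      using assms by (intro SUP_upper2[of "((x, xs), (b, bs))"]) (auto simp: pairing_def blinfun.diff_right)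
  qed
  finally show ?thesis .
qed

lemma graph_subset_subdiff_fitzpatrick:
  assumes "n_monotone 3 A" "fitzpatrick3 A = fitzpatrick A" "(u, vs) \<in> graph A"
  shows "graph A \<subseteq> graph (subdiff (\<lambda>y. fitzpatrick A (y, vs)))"
proof clarify
  fix x xs assume x: "(x, xs) \<in> graph A"
  have "ereal (pairing x vs) \<le> fitzpatrick A (x, vs)"
    unfolding fitzpatrick_apply using assms(3) by (intro SUP_upper2[of "(u, vs)"]) auto
  moreover have "fitzpatrick A (x, vs) \<noteq> \<infinity>"
    using fitzpatrick_le_if_3_monotone[OF assms(1,3) x] by auto
  moreover have "fitzpatrick A (x, vs) + ereal (pairing (y - x) xs) \<le> fitzpatrick A (y, vs)" for y
    using fitzpatrick_add_le_fitzpatrick3[OF x] assms(2) by simp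
  ultimately show "(x, xs) \<in> graph (subdiff (\<lambda>y. fitzpatrick A (y, vs)))"
    by (auto simp: graph_def subdiff_def)
qed

lemma maximal_monotone_eq_subdiff_fitzpatrick:
  assumes "maximal_monotone A" "fitzpatrick_family A = {fitzpatrick A}"
    and "n_monotone 3 A" "vs \<in> image_op A"
  shows "A = subdiff (\<lambda>y. fitzpatrick A (y, vs))"
proof -
  have "fitzpatrick3 A = fitzpatrick A"
    using fitzpatrick3_in_family[OF assms(3)] assms(2) by auto
  moreover obtain u where "(u, vs) \<in> graph A"
    using assms(4) by (auto simp: image_op_def graph_def)
  ultimately show ?thesis
    using maximal_monotone_eq_subdiff[OF assms(1)] graph_subset_subdiff_fitzpatrick[OF assms(3)] by blast
qed

theorem theoremA:
  fixes A :: "'a::banach \<Rightarrow> ('a \<Rightarrow>\<^sub>L real) set"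
  assumes "maximal_monotone A"
    and "fitzpatrick_family A = {fitzpatrick A}"
  shows "(n_monotone 3 A \<longleftrightarrow> cyclically_monotone A)
    \<and> (n_monotone 3 A \<longrightarrow>
        (\<forall>vs\<in>image_op A.
           proper_fun (\<lambda>x. fitzpatrick A (x, vs)) \<and> convex_fun (\<lambda>x. fitzpatrick A (x, vs)) \<and>
           lsc_fun (\<lambda>x. fitzpatrick A (x, vs)) \<and>
           (\<forall>x. A x = subdiff (\<lambda>y. fitzpatrick A (y, vs)) x)))"
proof -
  have F: "fitzpatrick A \<in> fitzpatrick_family A"
    using assms(2) by simp
  obtain v0 where "v0 \<in> image_op A"
    using graph_nonempty_if_fitzpatrick_proper F
    by (fastforce simp: fitzpatrick_family_def image_op_def graph_def)
  then have "cyclically_monotone A" if "n_monotone 3 A"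
    using maximal_monotone_eq_subdiff_fitzpatrick[OF assms that] cyclically_monotone_subdiff by metis
  then show ?thesis
    using fitzpatrick_family_slice[OF F] maximal_monotone_eq_subdiff_fitzpatrick[OF assms]
    by (auto simp: cyclically_monotone_def)
qed

end
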